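(* Let $\mathcal{X}=\{1,\dots,n\}$, let $\pi$ be a strictly positive probability distribution on $\mathcal{X}$, let $P$ be a $\pi$-reversible transition matrix, let $G$ be the Gibbs kernel induced by some partition of $\mathcal{X}$, and let $A_\alpha=\alpha P+(1-\alpha)G$. Then for every integer $l\geq2$ and every $\alpha\in(0,1)$, $$\|A_\alpha^l-\Pi\|_{F,\pi}^2\leq(n-1)(1-\alpha\gamma^*(P))^{2l}.$$
   Context: $\pi$-reversible means $\pi(x)P(x,y)=\pi(y)P(y,x)$. Gibbs kernel of a partition $\bigsqcup_i\mathcal{O}_i$: $G(x,y)=\pi(y)/\pi(\mathcal{O}(x))$ if $y\in\mathcal{O}(x)$ and $0$ otherwise. $\Pi$ is the matrix with every row equal to $\pi$; $\|M\|_{F,\pi}^2=\operatorname{Tr}(M^*M)$ with $M^*(x,y)=\pi(y)M(y,x)/\pi(x)$. For $\pi$-reversible $P$ with eigenvalues $\lambda_1\ge\dots\ge\lambda_n$, $\gamma^*(P)=1-\max\{|\lambda_2(P)|,|\lambda_n(P)|\}$. *)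

theory Defs
  imports "Jordan_Normal_Form.Jordan_Normal_Form" "HOL-Library.Disjoint_Sets"
begin

text \<open>State space X = {0..<n} (0-based rendering of {1..n}); matrices are n x n real matrices.\<close>

definition prob_dist :: "nat \<Rightarrow> (nat \<Rightarrow> real) \<Rightarrow> bool" where
  "prob_dist n \<pi> \<longleftrightarrow> (\<forall>x<n. \<pi> x > 0) \<and> (\<Sum>x<n. \<pi> x) = 1"

definition transition_matrix :: "nat \<Rightarrow> real mat \<Rightarrow> bool" where
  "transition_matrix n P \<longleftrightarrow> P \<in> carrier_mat n n \<and>
     (\<forall>x<n. \<forall>y<n. P $$ (x,y) \<ge> 0) \<and> (\<forall>x<n. (\<Sum>y<n. P $$ (x,y)) = 1)"

definition reversible :: "nat \<Rightarrow> (nat \<Rightarrow> real) \<Rightarrow> real mat \<Rightarrow> bool" where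
  "reversible n \<pi> P \<longleftrightarrow> (\<forall>x<n. \<forall>y<n. \<pi> x * P $$ (x,y) = \<pi> y * P $$ (y,x))"

definition block_of :: "nat set set \<Rightarrow> nat \<Rightarrow> nat set" where
  "block_of Os x = (THE B. B \<in> Os \<and> x \<in> B)"

definition gibbs_kernel :: "nat \<Rightarrow> (nat \<Rightarrow> real) \<Rightarrow> nat set set \<Rightarrow> real mat" where
  "gibbs_kernel n \<pi> Os = mat n n (\<lambda>(x,y).
     if y \<in> block_of Os x then \<pi> y / (\<Sum>z\<in>block_of Os x. \<pi> z) else 0)"

definition Pi_mat :: "nat \<Rightarrow> (nat \<Rightarrow> real) \<Rightarrow> real mat" where
  "Pi_mat n \<pi> = mat n n (\<lambda>(x,y). \<pi> y)"

definition pi_adjoint :: "nat \<Rightarrow> (nat \<Rightarrow> real) \<Rightarrow> real mat \<Rightarrow> real mat" where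
  "pi_adjoint n \<pi> M = mat n n (\<lambda>(x,y). \<pi> y * M $$ (y,x) / \<pi> x)"

definition frob_sq :: "nat \<Rightarrow> (nat \<Rightarrow> real) \<Rightarrow> real mat \<Rightarrow> real" where
  "frob_sq n \<pi> M = (\<Sum>x<n. (pi_adjoint n \<pi> M * M) $$ (x,x))"

text \<open>Eigenvalues with multiplicity, in non-increasing order
  (lambda_1 = eig_list P ! 0, ..., lambda_n = eig_list P ! (n-1)).\<close>
definition eig_list :: "real mat \<Rightarrow> real list" where
  "eig_list P = (THE ls. sorted (rev ls) \<and>
      char_poly P = prod_list (map (\<lambda>a. [:- a, 1:]) ls))"

definition abs_spectral_gap :: "nat \<Rightarrow> real mat \<Rightarrow> real" where
  "abs_spectral_gap n P = 1 - max \<bar>eig_list P ! 1\<bar> \<bar>eig_list P ! (n - 1)\<bar>"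

end

(*
  Both P and the Gibbs kernel G are pi-reversible transition
  matrices, so they preserve the pi-mean and are self-adjoint on L2(pi). Conjugating P by
  D = diag(sqrt pi) gives a symmetric matrix with the spectrum of P; in an orthonormal eigenbasis
  of it one sees that on mean-zero vectors P shrinks the pi-norm by max(|lambda_2|, |lambda_n|)
  = 1 - gamma*(P), while G does not increase it (Jensen). By the triangle inequality A shrinks
  mean-zero vectors by 1 - alpha gamma*(P), and A^l by the l-th power of that. Finally, the x-th
  diagonal entry of (A^l - Pi)^* (A^l - Pi) is |A^l g_x|_pi^2 / pi_x for the mean-zero vector
  g_x = e_x - pi_x 1, whose squared pi-norm is pi_x (1 - pi_x); summing over x gives n - 1.
*)
theory Submission
  imports Defs "Jordan_Normal_Form.Schur_Decomposition" "HOL-Analysis.L2_Norm"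
begin

lemma orthogonal_mat_transpose_right:
  fixes W :: "'a::field mat"
  assumes "W \<in> carrier_mat n n" and "W\<^sup>T * W = 1\<^sub>m n"
  shows "W * W\<^sup>T = 1\<^sub>m n"
  using mat_mult_left_right_inverse[of "W\<^sup>T" n W] assms by auto

lemma orthonormal_basis_extension:
  fixes v :: "real vec"
  assumes v: "v \<in> carrier_vec n" and v0: "v \<noteq> 0\<^sub>v n"
  obtains W where "W \<in> carrier_mat n n" "W\<^sup>T * W = 1\<^sub>m n" "col W 0 = (1 / sqrt (v \<bullet> v)) \<cdot>\<^sub>v v"
proof -
  interpret cof_vec_space n "TYPE(real)" .
  have n: "n \<noteq> 0" using v v0 by auto
  define b where "b = basis_completion v"
  from basis_completion[OF v v0, folded b_def]
  have b: "distinct b" "\<not> lin_dep (set b)" "set b \<subseteq> carrier_vec n" "hd b = v" "length b = n"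
    by auto
  then obtain vs where bv: "b = v # vs" using n by (cases b) auto
  define ws where "ws = gram_schmidt n b"
  from gram_schmidt_result[OF b(3,1,2) ws_def]
  have ws: "corthogonal ws" "set ws \<subseteq> carrier_vec n" "length ws = n" using b(5) by auto
  have ws0: "ws ! 0 = v" using gram_schmidt_hd[OF v, of vs] ws(3) n
    unfolding ws_def bv by (cases "gram_schmidt n (v # vs)") auto
  have wsi: "ws ! i \<in> carrier_vec n" if "i < n" for i using ws that by auto
  have wpos: "ws ! i \<bullet> ws ! i > 0" if i: "i < n" for i
  proof -
    have "ws ! i \<bullet> ws ! i \<noteq> 0" using corthogonalD[OF ws(1), of i i] i ws(3) by simp
    moreover have "ws ! i \<bullet> ws ! i \<ge> 0" unfolding scalar_prod_def by (intro sum_nonneg) auto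
    ultimately show ?thesis by linarith
  qed
  define us where "us = map (\<lambda>w. (1 / sqrt (w \<bullet> w)) \<cdot>\<^sub>v w) ws"
  define W where "W = mat_of_cols n us"
  have colW: "col W i = (1 / sqrt (ws ! i \<bullet> ws ! i)) \<cdot>\<^sub>v ws ! i" if "i < n" for i
    using that ws(3) wsi unfolding W_def us_def by simp
  show thesis
  proof
    show W: "W \<in> carrier_mat n n"
      using mat_of_cols_carrier(1)[of n us] ws(3) unfolding W_def us_def by simp
    show "W\<^sup>T * W = 1\<^sub>m n"
    proof (rule eq_matI)
      fix i j assume "i < dim_row (1\<^sub>m n :: real mat)" "j < dim_col (1\<^sub>m n :: real mat)"
      hence i: "i < n" and j: "j < n" by auto
      have "(W\<^sup>T * W) $$ (i, j)
          = 1 / sqrt (ws ! i \<bullet> ws ! i) * (1 / sqrt (ws ! j \<bullet> ws ! j)) * (ws ! i \<bullet> ws ! j)"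
        using i j W wsi[OF i] wsi[OF j] by (simp add: colW)
      also have "\<dots> = 1\<^sub>m n $$ (i, j)"
        using corthogonalD[OF ws(1), of i j] wpos[OF i] i j ws(3)
        by (cases "i = j") (auto simp: field_simps)
      finally show "(W\<^sup>T * W) $$ (i, j) = 1\<^sub>m n $$ (i, j)" .
    qed (use W in auto)
    show "col W 0 = (1 / sqrt (v \<bullet> v)) \<cdot>\<^sub>v v" using colW[of 0] ws0 n by simp
  qed
qed

lemma orthogonal_mat_similar:
  fixes A W :: "'a::field mat"
  assumes A: "A \<in> carrier_mat n n" and W: "W \<in> carrier_mat n n" and WW: "W\<^sup>T * W = 1\<^sub>m n"
  shows "similar_mat A (W\<^sup>T * A * W)"
proof -
  have WWT: "W * W\<^sup>T = 1\<^sub>m n" by (rule orthogonal_mat_transpose_right[OF W WW])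
  have "W * (W\<^sup>T * A * W) * W\<^sup>T = (W * W\<^sup>T) * A * (W * W\<^sup>T)"
    using A W by (simp add: assoc_mult_mat[of _ n n _ n _ n])
  then show ?thesis
    using A W WW WWT by (intro similar_matI[where n = n and P = W and Q = "W\<^sup>T"]) auto
qed

lemma char_poly_one_by_one: "char_poly (mat 1 1 (\<lambda>_. e)) = [:- e, 1:]"
  by (simp add: char_poly_defs det_def sign_def)

lemma symmetric_deflation:
  fixes A W :: "real mat"
  assumes A: "A \<in> carrier_mat (Suc m) (Suc m)" and sym: "A\<^sup>T = A"
    and W: "W \<in> carrier_mat (Suc m) (Suc m)" and WW: "W\<^sup>T * W = 1\<^sub>m (Suc m)"
    and ev: "A *\<^sub>v col W 0 = e \<cdot>\<^sub>v col W 0"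
  obtains A3 where "A3 \<in> carrier_mat m m" "A3\<^sup>T = A3"
    "W\<^sup>T * A * W = four_block_mat (mat 1 1 (\<lambda>_. e)) (0\<^sub>m 1 m) (0\<^sub>m m 1) A3"
    "char_poly A = [:- e, 1:] * char_poly A3"
proof -
  define A' where "A' = W\<^sup>T * A * W"
  have A': "A' \<in> carrier_mat (Suc m) (Suc m)" unfolding A'_def using A W by auto
  have A'_assoc: "A' = W\<^sup>T * (A * W)"
    unfolding A'_def using A W by (simp add: assoc_mult_mat)
  have symA': "A'\<^sup>T = A'"
  proof -
    have "A'\<^sup>T = (A * W)\<^sup>T * W"
      unfolding A'_assoc using A W by (subst transpose_mult[of _ "Suc m" "Suc m"]) auto
    also have "\<dots> = W\<^sup>T * A * W"
      using A W by (subst transpose_mult[of _ "Suc m" "Suc m"]) (auto simp: sym)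
    finally show ?thesis unfolding A'_def .
  qed
  have A'_col0: "A' $$ (i, 0) = (if i = 0 then e else 0)" if i: "i < Suc m" for i
  proof -
    have "A' $$ (i, 0) = col W i \<bullet> (A *\<^sub>v col W 0)"
      using i A W unfolding A'_assoc by (simp add: mult_mat_vec_def)
    also have "\<dots> = e * (W\<^sup>T * W) $$ (i, 0)" using i W ev by simp
    finally show ?thesis using WW i by simp
  qed
  have A'_sym_entry: "A' $$ (j, i) = A' $$ (i, j)" if "i < Suc m" "j < Suc m" for i j
    using symA' A' that by (metis carrier_matD index_transpose_mat(1))
  define A3 where "A3 = mat m m (\<lambda>(i, j). A' $$ (Suc i, Suc j))"
  show thesis
  proof
    show "A3 \<in> carrier_mat m m" unfolding A3_def by simp
    show "A3\<^sup>T = A3"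
      by (rule eq_matI) (auto simp: A3_def A'_sym_entry)
    show blk: "W\<^sup>T * A * W = four_block_mat (mat 1 1 (\<lambda>_. e)) (0\<^sub>m 1 m) (0\<^sub>m m 1) A3"
      unfolding A'_def[symmetric]
    proof (rule eq_matI)
      fix i j assume "i < dim_row (four_block_mat (mat 1 1 (\<lambda>_. e)) (0\<^sub>m 1 m) (0\<^sub>m m 1) A3)"
        "j < dim_col (four_block_mat (mat 1 1 (\<lambda>_. e)) (0\<^sub>m 1 m) (0\<^sub>m m 1) A3)"
      then show "A' $$ (i, j) = four_block_mat (mat 1 1 (\<lambda>_. e)) (0\<^sub>m 1 m) (0\<^sub>m m 1) A3 $$ (i, j)"
        using A'_col0 A'_sym_entry[of 0] by (cases i; cases j) (auto simp: A3_def)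
    qed (use A' in \<open>auto simp: A3_def\<close>)
    have "char_poly A = char_poly (W\<^sup>T * A * W)"
      by (rule char_poly_similar[OF orthogonal_mat_similar[OF A W WW]])
    also have "\<dots> = [:- e, 1:] * char_poly A3"
      unfolding blk
      by (subst char_poly_four_block_zeros_col, unfold char_poly_one_by_one) (auto simp: A3_def)
    finally show "char_poly A = [:- e, 1:] * char_poly A3" .
  qed
qed

lemma transpose_mult_conj:
  fixes A W B :: "'a::comm_ring_1 mat"
  assumes "A \<in> carrier_mat n n" and "W \<in> carrier_mat n n" and "B \<in> carrier_mat n n"
  shows "(W * B)\<^sup>T * A * (W * B) = B\<^sup>T * (W\<^sup>T * A * W) * B"
  using assms by (simp add: transpose_mult[of _ n n _ n] assoc_mult_mat[of _ n n _ n _ n])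

lemma orthogonal_block_diag_conj:
  fixes W X :: "'a::comm_ring_1 mat"
  assumes W: "W \<in> carrier_mat m m" "W\<^sup>T * W = 1\<^sub>m m" and X: "X \<in> carrier_mat m m"
  defines "B \<equiv> four_block_mat (1\<^sub>m 1) (0\<^sub>m 1 m) (0\<^sub>m m 1) W"
  shows "B \<in> carrier_mat (Suc m) (Suc m)" and "B\<^sup>T * B = 1\<^sub>m (Suc m)"
    and "B\<^sup>T * four_block_mat (mat 1 1 (\<lambda>_. e)) (0\<^sub>m 1 m) (0\<^sub>m m 1) X * B
      = four_block_mat (mat 1 1 (\<lambda>_. e)) (0\<^sub>m 1 m) (0\<^sub>m m 1) (W\<^sup>T * X * W)"
proof -
  have WT: "W\<^sup>T \<in> carrier_mat m m" using W by simp
  have E: "mat 1 1 (\<lambda>_. e) \<in> carrier_mat 1 1" by simp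
  have BT: "B\<^sup>T = four_block_mat (1\<^sub>m 1) (0\<^sub>m 1 m) (0\<^sub>m m 1) W\<^sup>T"
    unfolding B_def
    using transpose_four_block_mat[OF one_carrier_mat zero_carrier_mat zero_carrier_mat W(1)] by simp
  show "B \<in> carrier_mat (Suc m) (Suc m)"
    unfolding B_def using four_block_carrier_mat[OF one_carrier_mat W(1), of 1] by simp
  show "B\<^sup>T * B = 1\<^sub>m (Suc m)"
    unfolding BT unfolding B_def using W
    by (subst mult_four_block_mat[OF one_carrier_mat zero_carrier_mat zero_carrier_mat WT
          one_carrier_mat zero_carrier_mat zero_carrier_mat W(1)]) simp
  have "B\<^sup>T * four_block_mat (mat 1 1 (\<lambda>_. e)) (0\<^sub>m 1 m) (0\<^sub>m m 1) X
      = four_block_mat (mat 1 1 (\<lambda>_. e)) (0\<^sub>m 1 m) (0\<^sub>m m 1) (W\<^sup>T * X)"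
    unfolding BT
    by (subst mult_four_block_mat[OF one_carrier_mat zero_carrier_mat zero_carrier_mat WT
          E zero_carrier_mat zero_carrier_mat X]) (use X W in simp)
  also have "\<dots> * B = four_block_mat (mat 1 1 (\<lambda>_. e)) (0\<^sub>m 1 m) (0\<^sub>m m 1) (W\<^sup>T * X * W)"
    unfolding B_def using X W
    by (subst mult_four_block_mat[OF E zero_carrier_mat zero_carrier_mat _
          one_carrier_mat zero_carrier_mat zero_carrier_mat W(1)]) simp_all
  finally show "B\<^sup>T * four_block_mat (mat 1 1 (\<lambda>_. e)) (0\<^sub>m 1 m) (0\<^sub>m m 1) X * B
      = four_block_mat (mat 1 1 (\<lambda>_. e)) (0\<^sub>m 1 m) (0\<^sub>m m 1) (W\<^sup>T * X * W)" .
qed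

lemma four_block_mat_diag_Cons:
  "four_block_mat (mat 1 1 (\<lambda>_. e)) (0\<^sub>m 1 m) (0\<^sub>m m 1) (mat_diag m (\<lambda>i. es ! i))
    = mat_diag (Suc m) (\<lambda>i. (e # es) ! i)"
  by (rule eq_matI) (auto simp: mat_diag_def less_Suc_eq_0_disj split: if_splits)

lemma real_symmetric_diagonalization:
  fixes A :: "real mat"
  assumes "A \<in> carrier_mat n n" and "A\<^sup>T = A" and "char_poly A = (\<Prod>e\<leftarrow>es. [:- e, 1:])"
  shows "\<exists>W \<in> carrier_mat n n. W\<^sup>T * W = 1\<^sub>m n \<and> W\<^sup>T * A * W = mat_diag n (\<lambda>i. es ! i)"
  using assms
proof (induction es arbitrary: n A)
  case Nil
  then have "n = 0" using degree_monic_char_poly[of A n] by simp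
  then show ?case using Nil(1) by (intro bexI[of _ "1\<^sub>m 0"]) (auto simp: mat_diag_def intro!: eq_matI)
next
  case (Cons e es n A)
  note A = Cons.prems(1) and sym = Cons.prems(2)
  have "degree (char_poly A) = Suc (length es)"
    using Cons.prems(3) degree_linear_factors[of uminus "e # es"] by simp
  then obtain m where n: "n = Suc m" using degree_monic_char_poly[OF A] by (cases n) auto
  have "eigenvalue A e"
    unfolding eigenvalue_root_char_poly[OF A] Cons.prems(3) by simp
  then obtain v where v: "v \<in> carrier_vec n" "v \<noteq> 0\<^sub>v n" "A *\<^sub>v v = e \<cdot>\<^sub>v v"
    using A unfolding eigenvalue_def eigenvector_def by auto
  obtain W1 where W1: "W1 \<in> carrier_mat n n" "W1\<^sup>T * W1 = 1\<^sub>m n"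
    and col0: "col W1 0 = (1 / sqrt (v \<bullet> v)) \<cdot>\<^sub>v v"
    using orthonormal_basis_extension[OF v(1,2)] by blast
  have "A *\<^sub>v col W1 0 = e \<cdot>\<^sub>v col W1 0"
    unfolding col0 using A v by (simp add: mult_mat_vec smult_smult_assoc mult.commute)
  then obtain A3 where A3: "A3 \<in> carrier_mat m m" "A3\<^sup>T = A3"
    and blk: "W1\<^sup>T * A * W1 = four_block_mat (mat 1 1 (\<lambda>_. e)) (0\<^sub>m 1 m) (0\<^sub>m m 1) A3"
    and "char_poly A = [:- e, 1:] * char_poly A3"
    using symmetric_deflation[of A m W1 e] A sym W1 n by blast
  then have "[:- e, 1:] * char_poly A3 = [:- e, 1:] * (\<Prod>e\<leftarrow>es. [:- e, 1:])"
    using Cons.prems(3) by simp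
  then have "char_poly A3 = (\<Prod>e\<leftarrow>es. [:- e, 1:])"
    by (subst (asm) mult_left_cancel) auto
  then obtain W3 where W3: "W3 \<in> carrier_mat m m" "W3\<^sup>T * W3 = 1\<^sub>m m"
    and diag3: "W3\<^sup>T * A3 * W3 = mat_diag m (\<lambda>i. es ! i)"
    using Cons.IH[OF A3(1,2)] by blast
  obtain B where B: "B \<in> carrier_mat n n" "B\<^sup>T * B = 1\<^sub>m n"
    "B\<^sup>T * four_block_mat (mat 1 1 (\<lambda>_. e)) (0\<^sub>m 1 m) (0\<^sub>m m 1) A3 * B
      = four_block_mat (mat 1 1 (\<lambda>_. e)) (0\<^sub>m 1 m) (0\<^sub>m m 1) (W3\<^sup>T * A3 * W3)"
    using orthogonal_block_diag_conj[OF W3 A3(1)] unfolding n by blast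
  show ?case
  proof (intro bexI conjI)
    show "W1 * B \<in> carrier_mat n n" using W1 B by simp
    show "(W1 * B)\<^sup>T * (W1 * B) = 1\<^sub>m n"
      using transpose_mult_conj[OF one_carrier_mat W1(1) B(1)] W1 B by simp
    show "(W1 * B)\<^sup>T * A * (W1 * B) = mat_diag n (\<lambda>i. (e # es) ! i)"
      unfolding transpose_mult_conj[OF A W1(1) B(1)] blk B(3) diag3 n
      by (rule four_block_mat_diag_Cons)
  qed
qed

lemma order_linear_factors:
  fixes xs :: "'a::idom list"
  shows "Polynomial.order a (\<Prod>x\<leftarrow>xs. [:- x, 1:]) = count (mset xs) a"
proof (induction xs)
  case (Cons x xs)
  have "(\<Prod>y\<leftarrow>x # xs. [:- y, 1:]) \<noteq> 0" by (subst prod_list_zero_iff) auto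
  then have "[:- x, 1:] * (\<Prod>y\<leftarrow>xs. [:- y, 1:]) \<noteq> 0"
    by (simp only: list.map prod_list.Cons not_False_eq_True)
  then have "Polynomial.order a (\<Prod>y\<leftarrow>x # xs. [:- y, 1:])
      = Polynomial.order a [:- x, 1:] + Polynomial.order a (\<Prod>y\<leftarrow>xs. [:- y, 1:])"
    unfolding list.map prod_list.Cons by (rule order_mult)
  then show ?case using Cons.IH by (simp add: order_linear')
qed simp

lemma linear_factors_rev_sort:
  "(\<Prod>x\<leftarrow>rev (sort es). [:- x, 1:]) = (\<Prod>x\<leftarrow>es. [:- x, 1 :: 'a::{idom,linorder}:])"
  by (simp add: prod_list.rev prod_mset_prod_list[symmetric] mset_map)

lemma eig_list_eq:
  assumes "char_poly A = (\<Prod>e\<leftarrow>es. [:- e, 1:])"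
  shows "eig_list A = rev (sort es)"
  unfolding eig_list_def
proof (rule the_equality)
  show "sorted (rev (rev (sort es))) \<and> char_poly A = (\<Prod>a\<leftarrow>rev (sort es). [:- a, 1:])"
    unfolding assms linear_factors_rev_sort by simp
next
  fix ls assume ls: "sorted (rev ls) \<and> char_poly A = (\<Prod>a\<leftarrow>ls. [:- a, 1:])"
  then have "count (mset ls) a = count (mset es) a" for a
    using assms order_linear_factors[of a ls] order_linear_factors[of a es] by simp
  then have "mset (rev ls) = mset es" by (simp add: multiset_eqI)
  then show "ls = rev (sort es)" using ls properties_for_sort[of "rev ls" es] by simp
qed

lemma real_symmetric_eigenvalue_real:
  fixes A :: "real mat" and v :: "complex vec"
  assumes A: "A \<in> carrier_mat n n" and sym: "A\<^sup>T = A"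
    and v: "v \<in> carrier_vec n" "v \<noteq> 0\<^sub>v n"
    and ev: "map_mat complex_of_real A *\<^sub>v v = a \<cdot>\<^sub>v v"
  shows "a \<in> \<real>"
proof -
  have A_sym_entry: "A $$ (j, i) = A $$ (i, j)" if "i < n" "j < n" for i j
    using sym A that by (metis carrier_matD index_transpose_mat(1))
  have Av: "(\<Sum>j<n. of_real (A $$ (i, j)) * v $ j) = a * v $ i" if i: "i < n" for i
  proof -
    have "(map_mat complex_of_real A *\<^sub>v v) $ i = (\<Sum>j<n. of_real (A $$ (i, j)) * v $ j)"
      using i A v by (simp add: scalar_prod_def atLeast0LessThan)
    then show ?thesis using ev i v by simp
  qed
  define s where "s = (\<Sum>i<n. cnj (v $ i) * (\<Sum>j<n. of_real (A $$ (i, j)) * v $ j))"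
  define N where "N = (\<Sum>i<n. cnj (v $ i) * v $ i)"
  have s_eq: "s = a * N" unfolding s_def N_def using Av by (simp add: sum_distrib_left mult_ac)
  have "cnj s = (\<Sum>i<n. \<Sum>j<n. v $ i * of_real (A $$ (i, j)) * cnj (v $ j))"
    unfolding s_def by (simp add: sum_distrib_left mult_ac)
  also have "\<dots> = s"
    unfolding s_def by (subst sum.swap) (simp add: sum_distrib_left mult_ac A_sym_entry)
  finally have s_real: "cnj s = s" .
  have N_eq: "N = of_real (\<Sum>i<n. (cmod (v $ i))\<^sup>2)"
    unfolding N_def of_real_sum by (intro sum.cong refl) (metis complex_norm_square mult.commute)
  obtain i where i: "i < n" "v $ i \<noteq> 0" using v by (metis carrier_vecD eq_vecI index_zero_vec)
  have "(\<Sum>i<n. (cmod (v $ i))\<^sup>2) > 0" by (rule sum_pos2[of _ i]) (use i in auto)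
  then have "N \<noteq> 0" unfolding N_eq by (metis of_real_eq_0_iff less_irrefl)
  moreover have "cnj N = N" unfolding N_eq by (simp only: complex_cnj_complex_of_real)
  ultimately have "cnj a = a" using s_eq s_real by (metis complex_cnj_mult mult_cancel_right)
  then show ?thesis using Reals_cnj_iff by blast
qed

lemma char_poly_real_symmetric_splits:
  fixes A :: "real mat"
  assumes A: "A \<in> carrier_mat n n" and sym: "A\<^sup>T = A"
  obtains es where "char_poly A = (\<Prod>e\<leftarrow>es. [:- e, 1:])"
proof -
  define Ac where "Ac = map_mat complex_of_real A"
  have Ac: "Ac \<in> carrier_mat n n" unfolding Ac_def using A by simp
  obtain as where cAc: "char_poly Ac = (\<Prod>a\<leftarrow>as. [:- a, 1:])"
    using char_poly_factorized[OF Ac] by blast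
  have as_real: "a \<in> \<real>" if a: "a \<in> set as" for a
  proof -
    have "eigenvalue Ac a"
      unfolding eigenvalue_root_char_poly[OF Ac] cAc using a by (simp add: poly_prod_list prod_list_zero_iff)
    then obtain v where "v \<in> carrier_vec n" "v \<noteq> 0\<^sub>v n" "Ac *\<^sub>v v = a \<cdot>\<^sub>v v"
      using Ac unfolding eigenvalue_def eigenvector_def by auto
    then show ?thesis using real_symmetric_eigenvalue_real[OF A sym] unfolding Ac_def by blast
  qed
  have as_eq: "as = map complex_of_real (map Re as)"
    by (simp add: map_idI as_real)
  interpret h: map_poly_inj_idom_hom "of_real :: real \<Rightarrow> complex" ..
  have "map_poly complex_of_real (char_poly A) = map_poly complex_of_real (\<Prod>e\<leftarrow>map Re as. [:- e, 1:])"
    unfolding of_real_hom.char_poly_hom[OF A, symmetric] Ac_def[symmetric] cAc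
    by (subst as_eq) (simp add: h.hom_prod_list o_def)
  then show thesis using that h.injectivity by blast
qed

lemma sorted_spectrum_bound_on_complement:
  fixes L :: "real list" and c w :: "nat \<Rightarrow> real"
  assumes sorted: "sorted (rev L)" and len: "length L = n" and top: "L ! 0 \<le> 1"
    and fixed: "\<And>i. i < n \<Longrightarrow> L ! i * w i = w i" and w0: "\<exists>i<n. w i \<noteq> 0"
    and orth: "(\<Sum>i<n. w i * c i) = 0"
  shows "(\<Sum>i<n. (L ! i * c i)\<^sup>2) \<le> (max \<bar>L ! 1\<bar> \<bar>L ! (n - 1)\<bar>)\<^sup>2 * (\<Sum>i<n. (c i)\<^sup>2)"
proof -
  define \<mu> where "\<mu> = max \<bar>L ! 1\<bar> \<bar>L ! (n - 1)\<bar>"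
  have mono: "L ! j \<le> L ! i" if "i \<le> j" "j < n" for i j
    using sorted len that by (metis sorted_rev_nth_mono)
  have tail: "\<bar>L ! i\<bar> \<le> \<mu>" if "1 \<le> i" "i < n" for i
    using mono[of 1 i] mono[of i "n - 1"] that unfolding \<mu>_def by linarith
  have coord: "c i = 0 \<or> \<bar>L ! i\<bar> \<le> \<mu>" if i: "i < n" for i
  proof (cases "i = 0 \<and> \<mu> < L ! 0")
    case True
    \<comment> \<open>Now L ! 0 > \<mu> \<ge> |L ! k| for k \<ge> 1 and L ! 0 \<le> 1, so only the top eigenvalue can be 1:
      w lives on coordinate 0, and orthogonality to w forces c 0 = 0.\<close>
    have w_tail: "w k = 0" if "1 \<le> k" "k < n" for k
      using fixed[of k] tail[OF that] True top that by (metis abs_ge_self mult_cancel_right2 not_le order_trans)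
    then have "w 0 \<noteq> 0" using w0 by (metis less_one not_le)
    moreover have "(\<Sum>k<n. w k * c k) = w 0 * c 0"
      using i True w_tail by (subst sum.mono_neutral_right[of "{..<n}" "{0}"]) auto
    ultimately show ?thesis using orth True by simp
  next
    case False
    have "\<bar>L ! (n - 1)\<bar> \<le> \<mu>" unfolding \<mu>_def by simp
    then have "i = 0 \<Longrightarrow> \<bar>L ! 0\<bar> \<le> \<mu>" using False mono[of 0 "n - 1"] i by auto
    then show ?thesis using tail[of i] i by (cases "i = 0") auto
  qed
  have "(L ! i * c i)\<^sup>2 \<le> \<mu>\<^sup>2 * (c i)\<^sup>2" if "i < n" for i
  proof (cases "c i = 0")
    case False
    then have "\<bar>L ! i\<bar> \<le> \<bar>\<mu>\<bar>" using coord[OF that] unfolding \<mu>_def by auto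
    then have "(L ! i)\<^sup>2 \<le> \<mu>\<^sup>2" by (simp only: abs_le_square_iff)
    then show ?thesis by (simp add: power_mult_distrib mult_right_mono)
  qed simp
  then have "(\<Sum>i<n. (L ! i * c i)\<^sup>2) \<le> (\<Sum>i<n. \<mu>\<^sup>2 * (c i)\<^sup>2)" by (intro sum_mono) auto
  then show ?thesis unfolding \<mu>_def sum_distrib_left .
qed

lemma orthogonal_mat_scalar_prod:
  fixes W :: "'a::comm_ring_1 mat"
  assumes W: "W \<in> carrier_mat n n" and WW: "W\<^sup>T * W = 1\<^sub>m n"
    and x: "x \<in> carrier_vec n" and y: "y \<in> carrier_vec n"
  shows "(W *\<^sub>v x) \<bullet> (W *\<^sub>v y) = x \<bullet> y"
proof -
  have "(W *\<^sub>v x) \<bullet> (W *\<^sub>v y) = (W\<^sup>T *\<^sub>v (W *\<^sub>v x)) \<bullet> y"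
    using transpose_vec_mult_scalar[OF W y, of "W *\<^sub>v x"] W x by auto
  also have "W\<^sup>T *\<^sub>v (W *\<^sub>v x) = x"
    using W x WW by (simp flip: assoc_mult_mat_vec)
  finally show ?thesis .
qed

lemma mat_diag_mult_vec:
  assumes "c \<in> carrier_vec n"
  shows "mat_diag n d *\<^sub>v c = vec n (\<lambda>i. d i * c $ i)"
proof -
  have "(\<Sum>k<n. (if i = k then d k else 0) * c $ k) = d i * c $ i" if "i < n" for i
    using that by (simp add: if_distrib[of "\<lambda>t. t * c $ _"] cong: if_cong)
  then show ?thesis
    using assms by (intro eq_vecI) (auto simp: mat_diag_def scalar_prod_def atLeast0LessThan)
qed

lemma orthogonal_mat_mult_vec_inverse:
  fixes W :: "'a::field mat"
  assumes W: "W \<in> carrier_mat n n" and WW: "W\<^sup>T * W = 1\<^sub>m n" and x: "x \<in> carrier_vec n"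
  shows "W *\<^sub>v (W\<^sup>T *\<^sub>v x) = x" and "W\<^sup>T *\<^sub>v (W *\<^sub>v x) = x"
  using W x WW orthogonal_mat_transpose_right[OF W WW] by (simp_all flip: assoc_mult_mat_vec)

lemma orthogonal_diag_mult_vec:
  fixes S W D :: "'a::field mat"
  assumes S: "S \<in> carrier_mat n n" and W: "W \<in> carrier_mat n n" and WW: "W\<^sup>T * W = 1\<^sub>m n"
    and diag: "W\<^sup>T * S * W = D" and D: "D \<in> carrier_mat n n" and x: "x \<in> carrier_vec n"
  shows "S *\<^sub>v x = W *\<^sub>v (D *\<^sub>v (W\<^sup>T *\<^sub>v x))"
proof -
  have WWT: "W * W\<^sup>T = 1\<^sub>m n" by (rule orthogonal_mat_transpose_right[OF W WW])
  have "W * D * W\<^sup>T = (W * W\<^sup>T) * S * (W * W\<^sup>T)"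
    unfolding diag[symmetric] using W S by (simp add: assoc_mult_mat[of _ n n _ n _ n])
  then have "S = W * D * W\<^sup>T" using WWT S by simp
  then show ?thesis using W D x by (simp add: assoc_mult_mat_vec[of _ n n _ n])
qed

lemma spectral_bound_on_complement:
  fixes S W :: "real mat" and L :: "real list"
  assumes S: "S \<in> carrier_mat n n" and W: "W \<in> carrier_mat n n" and WW: "W\<^sup>T * W = 1\<^sub>m n"
    and diag: "W\<^sup>T * S * W = mat_diag n (\<lambda>i. L ! i)"
    and sorted: "sorted (rev L)" and len: "length L = n" and top: "L ! 0 \<le> 1"
    and u: "u \<in> carrier_vec n" "u \<noteq> 0\<^sub>v n" "S *\<^sub>v u = u"
    and h: "h \<in> carrier_vec n" and orth: "u \<bullet> h = 0"
  shows "(S *\<^sub>v h) \<bullet> (S *\<^sub>v h) \<le> (max \<bar>L ! 1\<bar> \<bar>L ! (n - 1)\<bar>)\<^sup>2 * (h \<bullet> h)"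
proof -
  define D where "D = mat_diag n (\<lambda>i. L ! i)"
  have D: "D \<in> carrier_mat n n" unfolding D_def by simp
  note recover = orthogonal_mat_mult_vec_inverse(1)[OF W WW]
    and coords = orthogonal_mat_mult_vec_inverse(2)[OF W WW]
    and S_coord = orthogonal_diag_mult_vec[OF S W WW diag[folded D_def] D]
  define c where "c = W\<^sup>T *\<^sub>v h"
  define w where "w = W\<^sup>T *\<^sub>v u"
  have c: "c \<in> carrier_vec n" and w: "w \<in> carrier_vec n" unfolding c_def w_def using W h u by auto
  have "(S *\<^sub>v h) \<bullet> (S *\<^sub>v h) = (D *\<^sub>v c) \<bullet> (D *\<^sub>v c)"
    unfolding S_coord[OF h] c_def[symmetric] using W D c by (intro orthogonal_mat_scalar_prod[OF W WW]) auto
  also have "\<dots> = (\<Sum>i<n. (L ! i * c $ i)\<^sup>2)"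
    unfolding D_def mat_diag_mult_vec[OF c] by (simp add: scalar_prod_def atLeast0LessThan power2_eq_square)
  also have "\<dots> \<le> (max \<bar>L ! 1\<bar> \<bar>L ! (n - 1)\<bar>)\<^sup>2 * (\<Sum>i<n. (c $ i)\<^sup>2)"
  proof (rule sorted_spectrum_bound_on_complement[OF sorted len top])
    have "D *\<^sub>v w = W\<^sup>T *\<^sub>v (S *\<^sub>v u)"
      using S_coord[OF u(1)] D w by (simp add: w_def[symmetric] coords)
    then have Dw: "D *\<^sub>v w = w" unfolding u(3) w_def .
    show "L ! i * w $ i = w $ i" if "i < n" for i
      using arg_cong[OF Dw, of "\<lambda>v. v $ i"] that unfolding D_def mat_diag_mult_vec[OF w] by simp
    have "w \<noteq> 0\<^sub>v n" using recover[OF u(1)] u(2) W unfolding w_def[symmetric] by auto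
    then show "\<exists>i<n. w $ i \<noteq> 0" using w by (metis carrier_vecD eq_vecI index_zero_vec)
    have "u \<bullet> h = w \<bullet> c"
      using recover[OF u(1)] recover[OF h] orthogonal_mat_scalar_prod[OF W WW w c]
      unfolding w_def c_def by simp
    then show "(\<Sum>i<n. w $ i * c $ i) = 0"
      using orth c by (simp add: scalar_prod_def atLeast0LessThan)
  qed
  also have "(\<Sum>i<n. (c $ i)\<^sup>2) = c \<bullet> c"
    using c by (simp add: scalar_prod_def atLeast0LessThan power2_eq_square)
  also have "\<dots> = h \<bullet> h"
    using orthogonal_mat_scalar_prod[OF W WW c c] recover[OF h] unfolding c_def by simp
  finally show ?thesis .
qed

definition pi_mean :: "nat \<Rightarrow> (nat \<Rightarrow> real) \<Rightarrow> real vec \<Rightarrow> real" where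
  "pi_mean n \<pi> f = (\<Sum>x<n. \<pi> x * f $ x)"

definition pi_norm :: "nat \<Rightarrow> (nat \<Rightarrow> real) \<Rightarrow> real vec \<Rightarrow> real" where
  "pi_norm n \<pi> f = L2_set (\<lambda>x. sqrt (\<pi> x) * f $ x) {..<n}"

lemma pi_norm_nonneg: "0 \<le> pi_norm n \<pi> f"
  unfolding pi_norm_def by simp

lemma pi_norm_sq:
  assumes "\<And>x. x < n \<Longrightarrow> 0 \<le> \<pi> x"
  shows "(pi_norm n \<pi> f)\<^sup>2 = (\<Sum>x<n. \<pi> x * (f $ x)\<^sup>2)"
proof -
  have "(pi_norm n \<pi> f)\<^sup>2 = (\<Sum>x<n. (sqrt (\<pi> x) * f $ x)\<^sup>2)"
    unfolding pi_norm_def L2_set_def by (simp add: sum_nonneg)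
  also have "\<dots> = (\<Sum>x<n. \<pi> x * (f $ x)\<^sup>2)"
    using assms by (intro sum.cong) (simp_all add: power_mult_distrib)
  finally show ?thesis .
qed

lemma pi_norm_smult:
  assumes "f \<in> carrier_vec n"
  shows "pi_norm n \<pi> (a \<cdot>\<^sub>v f) = \<bar>a\<bar> * pi_norm n \<pi> f"
proof -
  have "pi_norm n \<pi> (a \<cdot>\<^sub>v f) = sqrt (a\<^sup>2 * (\<Sum>x<n. (sqrt (\<pi> x) * f $ x)\<^sup>2))"
    unfolding pi_norm_def L2_set_def using assms
    by (simp add: sum_distrib_left power_mult_distrib mult_ac)
  then show ?thesis unfolding pi_norm_def L2_set_def by (simp add: real_sqrt_mult)
qed

lemma pi_norm_add_le:
  assumes "f \<in> carrier_vec n" and "g \<in> carrier_vec n"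
  shows "pi_norm n \<pi> (f + g) \<le> pi_norm n \<pi> f + pi_norm n \<pi> g"
proof -
  have "pi_norm n \<pi> (f + g) = L2_set (\<lambda>x. sqrt (\<pi> x) * f $ x + sqrt (\<pi> x) * g $ x) {..<n}"
    unfolding pi_norm_def using assms by (intro L2_set_cong) (auto simp: distrib_left)
  then show ?thesis unfolding pi_norm_def by (simp add: L2_set_triangle_ineq)
qed

lemma transition_matrix_mult_ones:
  assumes "transition_matrix n P"
  shows "P *\<^sub>v vec n (\<lambda>_. 1) = vec n (\<lambda>_. 1)"
  using assms unfolding transition_matrix_def
  by (intro eq_vecI) (auto simp: scalar_prod_def atLeast0LessThan)

lemma pi_mean_mult_reversible:
  assumes P: "transition_matrix n P" and rev: "reversible n \<pi> P" and f: "f \<in> carrier_vec n"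
  shows "pi_mean n \<pi> (P *\<^sub>v f) = pi_mean n \<pi> f"
proof -
  have Pc: "P \<in> carrier_mat n n" and rows: "\<And>y. y < n \<Longrightarrow> (\<Sum>x<n. P $$ (y, x)) = 1"
    using P unfolding transition_matrix_def by auto
  have "pi_mean n \<pi> (P *\<^sub>v f) = (\<Sum>x<n. \<Sum>y<n. \<pi> x * P $$ (x, y) * f $ y)"
    unfolding pi_mean_def using Pc f
    by (simp add: scalar_prod_def atLeast0LessThan sum_distrib_left mult_ac)
  also have "\<dots> = (\<Sum>x<n. \<Sum>y<n. \<pi> y * P $$ (y, x) * f $ y)"
    using rev unfolding reversible_def by (intro sum.cong refl) (metis lessThan_iff)
  also have "\<dots> = (\<Sum>y<n. \<pi> y * f $ y * (\<Sum>x<n. P $$ (y, x)))"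
    by (subst sum.swap) (simp add: sum_distrib_left mult_ac)
  also have "\<dots> = pi_mean n \<pi> f" unfolding pi_mean_def by (simp add: rows)
  finally show ?thesis .
qed

lemma transition_matrix_mult_vec_sq_le:
  assumes P: "transition_matrix n P" and f: "f \<in> carrier_vec n" and x: "x < n"
  shows "((P *\<^sub>v f) $ x)\<^sup>2 \<le> (\<Sum>y<n. P $$ (x, y) * (f $ y)\<^sup>2)"
proof -
  have Pc: "P \<in> carrier_mat n n" and nonneg: "\<And>y. y < n \<Longrightarrow> 0 \<le> P $$ (x, y)"
    and row: "(\<Sum>y<n. P $$ (x, y)) = 1"
    using P x unfolding transition_matrix_def by auto
  define m where "m = (P *\<^sub>v f) $ x"
  have m: "m = (\<Sum>y<n. P $$ (x, y) * f $ y)"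
    unfolding m_def using Pc f x by (simp add: scalar_prod_def atLeast0LessThan)
  \<comment> \<open>Jensen's inequality for the probability vector in row x, as a variance.\<close>
  have "0 \<le> (\<Sum>y<n. P $$ (x, y) * (f $ y - m)\<^sup>2)"
    by (intro sum_nonneg mult_nonneg_nonneg) (auto simp: nonneg)
  also have "\<dots> = (\<Sum>y<n. P $$ (x, y) * (f $ y)\<^sup>2) - 2 * m * (\<Sum>y<n. P $$ (x, y) * f $ y)
      + m\<^sup>2 * (\<Sum>y<n. P $$ (x, y))"
    by (simp add: power2_diff sum_distrib_left sum_distrib_right sum_subtractf sum.distrib algebra_simps)
  also have "\<dots> = (\<Sum>y<n. P $$ (x, y) * (f $ y)\<^sup>2) - m\<^sup>2"
    unfolding m[symmetric] row by (simp add: power2_eq_square)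
  finally show ?thesis unfolding m_def by simp
qed

lemma pi_norm_mult_reversible_le:
  assumes P: "transition_matrix n P" and rev: "reversible n \<pi> P"
    and \<pi>: "\<And>x. x < n \<Longrightarrow> 0 \<le> \<pi> x" and f: "f \<in> carrier_vec n"
  shows "pi_norm n \<pi> (P *\<^sub>v f) \<le> pi_norm n \<pi> f"
proof -
  have rows: "\<And>y. y < n \<Longrightarrow> (\<Sum>x<n. P $$ (y, x)) = 1"
    using P unfolding transition_matrix_def by auto
  have "(pi_norm n \<pi> (P *\<^sub>v f))\<^sup>2 = (\<Sum>x<n. \<pi> x * ((P *\<^sub>v f) $ x)\<^sup>2)"
    by (rule pi_norm_sq[OF \<pi>])
  also have "\<dots> \<le> (\<Sum>x<n. \<pi> x * (\<Sum>y<n. P $$ (x, y) * (f $ y)\<^sup>2))"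
    by (intro sum_mono mult_left_mono transition_matrix_mult_vec_sq_le[OF P f] \<pi>) auto
  also have "\<dots> = (\<Sum>x<n. \<Sum>y<n. \<pi> x * P $$ (x, y) * (f $ y)\<^sup>2)"
    by (simp add: sum_distrib_left mult_ac)
  also have "\<dots> = (\<Sum>x<n. \<Sum>y<n. \<pi> y * P $$ (y, x) * (f $ y)\<^sup>2)"
    using rev unfolding reversible_def by (intro sum.cong refl) (metis lessThan_iff)
  also have "\<dots> = (\<Sum>y<n. \<pi> y * (f $ y)\<^sup>2 * (\<Sum>x<n. P $$ (y, x)))"
    by (subst sum.swap) (simp add: sum_distrib_left mult_ac)
  also have "\<dots> = (pi_norm n \<pi> f)\<^sup>2"
    by (simp add: rows pi_norm_sq[OF \<pi>])
  finally show ?thesis by (rule power2_le_imp_le[OF _ pi_norm_nonneg])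
qed

lemma transition_matrix_eigenvalue_abs_le:
  assumes P: "transition_matrix n P" and ev: "eigenvalue P a"
  shows "\<bar>a\<bar> \<le> 1"
proof -
  have Pc: "P \<in> carrier_mat n n" and nonneg: "\<And>x y. x < n \<Longrightarrow> y < n \<Longrightarrow> 0 \<le> P $$ (x, y)"
    and rows: "\<And>x. x < n \<Longrightarrow> (\<Sum>y<n. P $$ (x, y)) = 1"
    using P unfolding transition_matrix_def by auto
  obtain v where v: "v \<in> carrier_vec n" "v \<noteq> 0\<^sub>v n" "P *\<^sub>v v = a \<cdot>\<^sub>v v"
    using ev Pc unfolding eigenvalue_def eigenvector_def by auto
  \<comment> \<open>Evaluate the eigenvalue equation at a coordinate where the absolute value of v is maximal.\<close>
  obtain x1 where x1: "x1 < n" "v $ x1 \<noteq> 0" using v by (metis carrier_vecD eq_vecI index_zero_vec)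
  define M where "M = Max ((\<lambda>y. \<bar>v $ y\<bar>) ` {..<n})"
  have le_M: "\<bar>v $ y\<bar> \<le> M" if "y < n" for y unfolding M_def using that by (intro Max_ge) auto
  obtain x0 where x0: "x0 < n" "\<bar>v $ x0\<bar> = M"
    using Max_in[of "(\<lambda>y. \<bar>v $ y\<bar>) ` {..<n}"] x1 unfolding M_def by fastforce
  have M_pos: "0 < M" using le_M[OF x1(1)] x1(2) by linarith
  have "\<bar>a\<bar> * M = \<bar>\<Sum>y<n. P $$ (x0, y) * v $ y\<bar>"
    using arg_cong[OF v(3), of "\<lambda>w. w $ x0"] x0 v(1) Pc
    by (simp add: scalar_prod_def atLeast0LessThan abs_mult flip: x0(2))
  also have "\<dots> \<le> (\<Sum>y<n. P $$ (x0, y) * M)"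
    by (rule order_trans[OF sum_abs sum_mono]) (simp add: abs_mult nonneg x0(1) le_M mult_left_mono)
  also have "\<dots> = M" using rows[OF x0(1)] by (simp flip: sum_distrib_right)
  finally show ?thesis using M_pos by simp
qed

lemma block_of_eq:
  assumes "partition_on A Os" and "B \<in> Os" and "x \<in> B"
  shows "block_of Os x = B"
  unfolding block_of_def
proof (rule the_equality)
  fix C assume "C \<in> Os \<and> x \<in> C"
  then show "C = B" using assms partition_onD2[OF assms(1)] by (blast dest: disjointD)
qed (use assms in simp)

lemma block_of_mem:
  assumes "partition_on A Os" and "x \<in> A"
  shows "block_of Os x \<in> Os" and "x \<in> block_of Os x"
  using assms block_of_eq[OF assms(1)] partition_onD1[OF assms(1)] by auto

lemma transition_matrix_gibbs_kernel:
  assumes part: "partition_on {..<n} Os" and \<pi>: "\<And>x. x < n \<Longrightarrow> 0 < \<pi> x"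
  shows "transition_matrix n (gibbs_kernel n \<pi> Os)"
  unfolding transition_matrix_def
proof (intro conjI allI impI)
  show "gibbs_kernel n \<pi> Os \<in> carrier_mat n n" unfolding gibbs_kernel_def by simp
  fix x assume x: "x < n"
  define B where "B = block_of Os x"
  have "B \<in> Os" and "x \<in> B" using block_of_mem[OF part] x unfolding B_def by auto
  then have B: "B \<subseteq> {..<n}" "x \<in> B" using partition_onD1[OF part] by blast+
  then have "finite B" using finite_subset by blast
  then have Z: "0 < (\<Sum>z\<in>B. \<pi> z)"
    using B by (intro sum_pos2[OF _ B(2)]) (auto simp: \<pi> less_imp_le)
  show "0 \<le> gibbs_kernel n \<pi> Os $$ (x, y)" if "y < n" for y
    using x that Z \<pi>[OF that] unfolding B_def by (simp add: gibbs_kernel_def)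
  have "(\<Sum>y<n. gibbs_kernel n \<pi> Os $$ (x, y)) = (\<Sum>y\<in>B. \<pi> y / (\<Sum>z\<in>B. \<pi> z))"
    using x B(1) unfolding B_def
    by (simp add: gibbs_kernel_def sum.inter_restrict[symmetric] Int_absorb1)
  also have "\<dots> = 1" using Z by (simp flip: sum_divide_distrib)
  finally show "(\<Sum>y<n. gibbs_kernel n \<pi> Os $$ (x, y)) = 1" .
qed

lemma reversible_gibbs_kernel:
  assumes part: "partition_on {..<n} Os"
  shows "reversible n \<pi> (gibbs_kernel n \<pi> Os)"
  unfolding reversible_def
proof (intro allI impI)
  fix x y assume x: "x < n" and y: "y < n"
  have "y \<in> block_of Os x \<longleftrightarrow> block_of Os x = block_of Os y"
    using block_of_mem[OF part] block_of_eq[OF part] x y by (metis lessThan_iff)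
  moreover have "x \<in> block_of Os y \<longleftrightarrow> block_of Os x = block_of Os y"
    using block_of_mem[OF part] block_of_eq[OF part] x y by (metis lessThan_iff)
  ultimately show "\<pi> x * gibbs_kernel n \<pi> Os $$ (x, y) = \<pi> y * gibbs_kernel n \<pi> Os $$ (y, x)"
    using x y unfolding gibbs_kernel_def by auto
qed

lemma transition_matrix_convex_comb:
  assumes "transition_matrix n P" and "transition_matrix n G" and "0 \<le> a" and "a \<le> 1"
  shows "transition_matrix n (a \<cdot>\<^sub>m P + (1 - a) \<cdot>\<^sub>m G)"
  using assms unfolding transition_matrix_def
  by (auto simp: sum.distrib sum_distrib_left[symmetric])

lemma reversible_lincomb:
  assumes rev: "reversible n \<pi> P" "reversible n \<pi> G"
    and carrier: "P \<in> carrier_mat n n" "G \<in> carrier_mat n n"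
  shows "reversible n \<pi> (a \<cdot>\<^sub>m P + b \<cdot>\<^sub>m G)"
  unfolding reversible_def
proof (intro allI impI)
  fix x y assume x: "x < n" and y: "y < n"
  have "\<pi> x * (a \<cdot>\<^sub>m P + b \<cdot>\<^sub>m G) $$ (x, y) = a * (\<pi> x * P $$ (x, y)) + b * (\<pi> x * G $$ (x, y))"
    using x y carrier by (simp add: algebra_simps)
  also have "\<dots> = a * (\<pi> y * P $$ (y, x)) + b * (\<pi> y * G $$ (y, x))"
    using rev x y unfolding reversible_def by metis
  also have "\<dots> = \<pi> y * (a \<cdot>\<^sub>m P + b \<cdot>\<^sub>m G) $$ (y, x)"
    using x y carrier by (simp add: algebra_simps)
  finally show "\<pi> x * (a \<cdot>\<^sub>m P + b \<cdot>\<^sub>m G) $$ (x, y) = \<pi> y * (a \<cdot>\<^sub>m P + b \<cdot>\<^sub>m G) $$ (y, x)" .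
qed

lemma mat_diag_mult_inverse:
  assumes "\<And>x. x < n \<Longrightarrow> f x * g x = 1"
  shows "mat_diag n f * mat_diag n g = 1\<^sub>m n"
  unfolding mat_diag_diag using assms by (auto simp: mat_diag_def intro!: eq_matI)

definition pi_symmetrize :: "nat \<Rightarrow> (nat \<Rightarrow> real) \<Rightarrow> real mat \<Rightarrow> real mat" where
  "pi_symmetrize n \<pi> P = mat_diag n (\<lambda>x. sqrt (\<pi> x)) * P * mat_diag n (\<lambda>x. 1 / sqrt (\<pi> x))"

lemma pi_symmetrize_carrier: "P \<in> carrier_mat n n \<Longrightarrow> pi_symmetrize n \<pi> P \<in> carrier_mat n n"
  unfolding pi_symmetrize_def by (metis mat_diag_dim mult_carrier_mat)

lemma pi_symmetrize_symmetric:
  assumes P: "P \<in> carrier_mat n n" and rev: "reversible n \<pi> P" and \<pi>: "\<And>x. x < n \<Longrightarrow> 0 < \<pi> x"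
  shows "(pi_symmetrize n \<pi> P)\<^sup>T = pi_symmetrize n \<pi> P"
proof -
  have entry: "pi_symmetrize n \<pi> P $$ (x, y) = sqrt (\<pi> x) * P $$ (x, y) / sqrt (\<pi> y)"
    if "x < n" "y < n" for x y
    unfolding pi_symmetrize_def using P that
    by (simp add: mat_diag_mult_left[of _ n n] mat_diag_mult_right[of _ n n])
  have "sqrt (\<pi> y) * P $$ (y, x) / sqrt (\<pi> x) = sqrt (\<pi> x) * P $$ (x, y) / sqrt (\<pi> y)"
    if x: "x < n" and y: "y < n" for x y
  proof -
    have "\<pi> x * P $$ (x, y) = \<pi> y * P $$ (y, x)" using rev x y unfolding reversible_def by blast
    then show ?thesis
      using \<pi>[OF x] \<pi>[OF y] by (simp add: field_simps) (simp add: mult.assoc[symmetric])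
  qed
  then show ?thesis
    using P by (intro eq_matI) (auto simp: entry pi_symmetrize_carrier[OF P, THEN carrier_matD(1)]
        pi_symmetrize_carrier[OF P, THEN carrier_matD(2)])
qed

lemma char_poly_pi_symmetrize:
  assumes P: "P \<in> carrier_mat n n" and \<pi>: "\<And>x. x < n \<Longrightarrow> 0 < \<pi> x"
  shows "char_poly (pi_symmetrize n \<pi> P) = char_poly P"
proof (rule char_poly_similar, rule similar_matI)
  show "mat_diag n (\<lambda>x. sqrt (\<pi> x)) * mat_diag n (\<lambda>x. 1 / sqrt (\<pi> x)) = 1\<^sub>m n"
    by (intro mat_diag_mult_inverse) (fastforce dest: \<pi>)
  show "mat_diag n (\<lambda>x. 1 / sqrt (\<pi> x)) * mat_diag n (\<lambda>x. sqrt (\<pi> x)) = 1\<^sub>m n"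
    by (intro mat_diag_mult_inverse) (fastforce dest: \<pi>)
qed (use pi_symmetrize_carrier[OF P] P in \<open>auto simp: pi_symmetrize_def\<close>)

lemma pi_symmetrize_mult_vec:
  assumes P: "P \<in> carrier_mat n n" and \<pi>: "\<And>x. x < n \<Longrightarrow> 0 < \<pi> x" and f: "f \<in> carrier_vec n"
  shows "pi_symmetrize n \<pi> P *\<^sub>v (mat_diag n (\<lambda>x. sqrt (\<pi> x)) *\<^sub>v f)
    = mat_diag n (\<lambda>x. sqrt (\<pi> x)) *\<^sub>v (P *\<^sub>v f)"
proof -
  define D Di where "D = mat_diag n (\<lambda>x. sqrt (\<pi> x))" and "Di = mat_diag n (\<lambda>x. 1 / sqrt (\<pi> x))"
  have D: "D \<in> carrier_mat n n" and Di: "Di \<in> carrier_mat n n" unfolding D_def Di_def by simp_all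
  have "Di * D = 1\<^sub>m n"
    unfolding D_def Di_def by (intro mat_diag_mult_inverse) (fastforce dest: \<pi>)
  then have "Di *\<^sub>v (D *\<^sub>v f) = f" using D Di f by (simp flip: assoc_mult_mat_vec)
  moreover have "pi_symmetrize n \<pi> P *\<^sub>v (D *\<^sub>v f) = D *\<^sub>v (P *\<^sub>v (Di *\<^sub>v (D *\<^sub>v f)))"
    unfolding pi_symmetrize_def D_def[symmetric] Di_def[symmetric] using D Di P f
    by (simp add: assoc_mult_mat_vec[of _ n n _ n])
  ultimately show ?thesis unfolding D_def by simp
qed

lemma pi_norm_eq_sqrt_scalar_prod:
  assumes "f \<in> carrier_vec n"
  shows "pi_norm n \<pi> f
    = sqrt ((mat_diag n (\<lambda>x. sqrt (\<pi> x)) *\<^sub>v f) \<bullet> (mat_diag n (\<lambda>x. sqrt (\<pi> x)) *\<^sub>v f))"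
  using assms unfolding pi_norm_def L2_set_def
  by (simp add: mat_diag_mult_vec scalar_prod_def atLeast0LessThan power2_eq_square)

lemma pi_mean_eq_scalar_prod:
  assumes \<pi>: "\<And>x. x < n \<Longrightarrow> 0 \<le> \<pi> x" and f: "f \<in> carrier_vec n"
  shows "pi_mean n \<pi> f
    = (mat_diag n (\<lambda>x. sqrt (\<pi> x)) *\<^sub>v vec n (\<lambda>_. 1)) \<bullet> (mat_diag n (\<lambda>x. sqrt (\<pi> x)) *\<^sub>v f)"
  using assms unfolding pi_mean_def
  by (auto simp: mat_diag_mult_vec scalar_prod_def atLeast0LessThan mult.assoc[symmetric] intro!: sum.cong)

lemma pi_symmetrize_spectral_decomposition:
  assumes \<pi>: "prob_dist n \<pi>" and P: "transition_matrix n P" and rev: "reversible n \<pi> P"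
  obtains W where "W \<in> carrier_mat n n" "W\<^sup>T * W = 1\<^sub>m n"
    "W\<^sup>T * pi_symmetrize n \<pi> P * W = mat_diag n (\<lambda>i. eig_list P ! i)"
    "sorted (rev (eig_list P))" "length (eig_list P) = n" "eig_list P ! 0 \<le> 1"
proof -
  have pos: "\<And>x. x < n \<Longrightarrow> 0 < \<pi> x" and n: "0 < n"
    using \<pi> unfolding prob_dist_def by (auto intro: gr0I)
  have Pc: "P \<in> carrier_mat n n" using P unfolding transition_matrix_def by simp
  define S where "S = pi_symmetrize n \<pi> P"
  define L where "L = eig_list P"
  have S: "S \<in> carrier_mat n n" and symS: "S\<^sup>T = S" and cpS: "char_poly S = char_poly P"
    unfolding S_def using pi_symmetrize_carrier[OF Pc] pi_symmetrize_symmetric[OF Pc rev pos]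
      char_poly_pi_symmetrize[OF Pc pos] by simp_all
  obtain es where es: "char_poly S = (\<Prod>e\<leftarrow>es. [:- e, 1:])"
    using char_poly_real_symmetric_splits[OF S symS] .
  have L_eq: "L = rev (sort es)" unfolding L_def using eig_list_eq[of P es] es cpS by simp
  have cpL: "char_poly S = (\<Prod>e\<leftarrow>L. [:- e, 1:])" unfolding L_eq es linear_factors_rev_sort ..
  have lenL: "length L = n"
    using degree_monic_char_poly[OF S] degree_linear_factors[of uminus L] cpL by simp
  have "L ! 0 \<in> set L" using n lenL by simp
  then have "poly (char_poly P) (L ! 0) = 0"
    unfolding cpS[symmetric] cpL by (simp add: poly_prod_list prod_list_zero_iff)
  then have "L ! 0 \<le> 1"
    using transition_matrix_eigenvalue_abs_le[OF P] eigenvalue_root_char_poly[OF Pc] by fastforce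
  moreover have "sorted (rev L)" unfolding L_eq by simp
  ultimately show thesis
    using that real_symmetric_diagonalization[OF S symS cpL] lenL unfolding S_def L_def by blast
qed

lemma spectral_gap_mean_zero_contraction:
  assumes \<pi>: "prob_dist n \<pi>" and P: "transition_matrix n P" and rev: "reversible n \<pi> P"
    and f: "f \<in> carrier_vec n" and mean: "pi_mean n \<pi> f = 0"
  shows "pi_norm n \<pi> (P *\<^sub>v f) \<le> (1 - abs_spectral_gap n P) * pi_norm n \<pi> f"
proof -
  have pos: "\<And>x. x < n \<Longrightarrow> 0 < \<pi> x" and n: "0 < n"
    using \<pi> unfolding prob_dist_def by (auto intro: gr0I)
  have Pc: "P \<in> carrier_mat n n" using P unfolding transition_matrix_def by simp
  define S where "S = pi_symmetrize n \<pi> P"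
  define D where "D = mat_diag n (\<lambda>x. sqrt (\<pi> x))"
  define \<mu> where "\<mu> = max \<bar>eig_list P ! 1\<bar> \<bar>eig_list P ! (n - 1)\<bar>"
  obtain W where W: "W \<in> carrier_mat n n" "W\<^sup>T * W = 1\<^sub>m n"
    "W\<^sup>T * S * W = mat_diag n (\<lambda>i. eig_list P ! i)"
    and L: "sorted (rev (eig_list P))" "length (eig_list P) = n" "eig_list P ! 0 \<le> 1"
    using pi_symmetrize_spectral_decomposition[OF \<pi> P rev] unfolding S_def by blast
  define u where "u = D *\<^sub>v vec n (\<lambda>_. 1)"
  define h where "h = D *\<^sub>v f"
  have u: "u \<in> carrier_vec n" and h: "h \<in> carrier_vec n"
    unfolding u_def h_def D_def
    using mult_mat_vec_carrier[OF mat_diag_dim vec_carrier] mult_mat_vec_carrier[OF mat_diag_dim f]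
    by auto
  have "u $ 0 \<noteq> 0" unfolding u_def D_def using n pos[OF n] by (simp add: mat_diag_mult_vec)
  then have u0: "u \<noteq> 0\<^sub>v n" using n by auto
  have "S *\<^sub>v u = D *\<^sub>v (P *\<^sub>v vec n (\<lambda>_. 1))"
    unfolding S_def u_def D_def by (rule pi_symmetrize_mult_vec[OF Pc pos vec_carrier])
  then have Su: "S *\<^sub>v u = u" unfolding transition_matrix_mult_ones[OF P] u_def .
  have uh: "u \<bullet> h = 0"
    using pi_mean_eq_scalar_prod[of n \<pi> f] pos f mean unfolding u_def h_def D_def by (simp add: less_imp_le)
  have Sh: "S *\<^sub>v h = D *\<^sub>v (P *\<^sub>v f)"
    unfolding S_def h_def D_def by (rule pi_symmetrize_mult_vec[OF Pc pos f])
  have S: "S \<in> carrier_mat n n" unfolding S_def by (rule pi_symmetrize_carrier[OF Pc])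
  have "pi_norm n \<pi> (P *\<^sub>v f) = sqrt ((S *\<^sub>v h) \<bullet> (S *\<^sub>v h))"
    unfolding Sh D_def using Pc f by (simp add: pi_norm_eq_sqrt_scalar_prod)
  also have "\<dots> \<le> sqrt (\<mu>\<^sup>2 * (h \<bullet> h))" unfolding \<mu>_def
    using spectral_bound_on_complement[OF S W L u u0 Su h uh] by simp
  also have "\<dots> = \<mu> * pi_norm n \<pi> f"
    unfolding h_def D_def pi_norm_eq_sqrt_scalar_prod[OF f] \<mu>_def by (simp add: real_sqrt_mult)
  also have "\<mu> = 1 - abs_spectral_gap n P" unfolding \<mu>_def abs_spectral_gap_def by simp
  finally show ?thesis .
qed

lemma smult_mat_mult_vec:
  assumes "A \<in> carrier_mat nr nc" and "v \<in> carrier_vec nc"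
  shows "(a \<cdot>\<^sub>m A) *\<^sub>v v = a \<cdot>\<^sub>v (A *\<^sub>v v)"
  using assms by (intro eq_vecI) (auto simp: scalar_prod_def sum_distrib_left mult.assoc)

lemma mixture_mean_zero_contraction:
  assumes \<pi>: "prob_dist n \<pi>" and P: "transition_matrix n P" "reversible n \<pi> P"
    and G: "transition_matrix n G" "reversible n \<pi> G" and \<alpha>: "0 \<le> \<alpha>" "\<alpha> \<le> 1"
    and f: "f \<in> carrier_vec n" and mean: "pi_mean n \<pi> f = 0"
  shows "pi_norm n \<pi> ((\<alpha> \<cdot>\<^sub>m P + (1 - \<alpha>) \<cdot>\<^sub>m G) *\<^sub>v f)
    \<le> (1 - \<alpha> * abs_spectral_gap n P) * pi_norm n \<pi> f"
proof -
  have Pc: "P \<in> carrier_mat n n" and Gc: "G \<in> carrier_mat n n"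
    using P(1) G(1) unfolding transition_matrix_def by simp_all
  have \<pi>0: "\<And>x. x < n \<Longrightarrow> 0 \<le> \<pi> x" using \<pi> unfolding prob_dist_def by (simp add: less_imp_le)
  have "(\<alpha> \<cdot>\<^sub>m P + (1 - \<alpha>) \<cdot>\<^sub>m G) *\<^sub>v f = \<alpha> \<cdot>\<^sub>v (P *\<^sub>v f) + (1 - \<alpha>) \<cdot>\<^sub>v (G *\<^sub>v f)"
    using Pc Gc f by (simp add: add_mult_distrib_mat_vec[of _ n n] smult_mat_mult_vec)
  then have "pi_norm n \<pi> ((\<alpha> \<cdot>\<^sub>m P + (1 - \<alpha>) \<cdot>\<^sub>m G) *\<^sub>v f)
      \<le> \<alpha> * pi_norm n \<pi> (P *\<^sub>v f) + (1 - \<alpha>) * pi_norm n \<pi> (G *\<^sub>v f)"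
    using pi_norm_add_le[of "\<alpha> \<cdot>\<^sub>v (P *\<^sub>v f)" n "(1 - \<alpha>) \<cdot>\<^sub>v (G *\<^sub>v f)" \<pi>] Pc Gc f \<alpha>
    by (simp add: pi_norm_smult)
  also have "\<dots> \<le> \<alpha> * ((1 - abs_spectral_gap n P) * pi_norm n \<pi> f) + (1 - \<alpha>) * pi_norm n \<pi> f"
    using spectral_gap_mean_zero_contraction[OF \<pi> P f mean] pi_norm_mult_reversible_le[OF G \<pi>0 f] \<alpha>
    by (intro add_mono mult_left_mono) auto
  also have "\<dots> = (1 - \<alpha> * abs_spectral_gap n P) * pi_norm n \<pi> f" by (simp add: algebra_simps)
  finally show ?thesis .
qed

lemma pow_mat_mult_vec_fixed:
  assumes A: "A \<in> carrier_mat n n" and v: "v \<in> carrier_vec n" and Av: "A *\<^sub>v v = v"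
  shows "A ^\<^sub>m k *\<^sub>v v = v"
proof (induction k)
  case 0
  show ?case using A v by simp
next
  case (Suc k)
  have "A ^\<^sub>m Suc k *\<^sub>v v = A ^\<^sub>m k *\<^sub>v (A *\<^sub>v v)"
    using A v by (simp add: assoc_mult_mat_vec[of _ n n _ n])
  then show ?case using Av Suc.IH by simp
qed

lemma pow_mat_mult_vec_bound:
  fixes A :: "'a::comm_semiring_1 mat" and N :: "'a vec \<Rightarrow> real"
  assumes A: "A \<in> carrier_mat n n" and c: "0 \<le> c"
    and step: "\<And>f. f \<in> carrier_vec n \<Longrightarrow> V f \<Longrightarrow> V (A *\<^sub>v f) \<and> N (A *\<^sub>v f) \<le> c * N f"
    and f: "f \<in> carrier_vec n" "V f"
  shows "N (A ^\<^sub>m k *\<^sub>v f) \<le> c ^ k * N f"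
  using f
proof (induction k arbitrary: f)
  case 0
  then show ?case using A by simp
next
  case (Suc k)
  have Af: "A *\<^sub>v f \<in> carrier_vec n" "V (A *\<^sub>v f)" using A Suc.prems step by auto
  have "A ^\<^sub>m Suc k *\<^sub>v f = A ^\<^sub>m k *\<^sub>v (A *\<^sub>v f)"
    using A Suc.prems by (simp add: assoc_mult_mat_vec[of _ n n _ n])
  also have "N \<dots> \<le> c ^ k * N (A *\<^sub>v f)" by (rule Suc.IH[OF Af])
  also have "\<dots> \<le> c ^ k * (c * N f)" using step[OF Suc.prems] c by (simp add: mult_left_mono)
  finally show ?case by (simp add: mult_ac)
qed

lemma pi_mean_centred_unit_vec:
  assumes "prob_dist n \<pi>" and "x < n"
  shows "pi_mean n \<pi> (unit_vec n x - \<pi> x \<cdot>\<^sub>v vec n (\<lambda>_. 1)) = 0"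
  using assms unfolding pi_mean_def prob_dist_def
  by (simp add: algebra_simps sum_subtractf sum_distrib_right[symmetric]
      if_distrib[of "\<lambda>t. \<pi> _ * t"] cong: if_cong)

lemma pi_norm_centred_unit_vec:
  assumes \<pi>: "prob_dist n \<pi>" and x: "x < n"
  shows "(pi_norm n \<pi> (unit_vec n x - \<pi> x \<cdot>\<^sub>v vec n (\<lambda>_. 1)))\<^sup>2 = \<pi> x * (1 - \<pi> x)"
proof -
  have \<pi>0: "\<And>z. z < n \<Longrightarrow> 0 \<le> \<pi> z" and sum1: "(\<Sum>z<n. \<pi> z) = 1"
    using \<pi> unfolding prob_dist_def by (auto simp: less_imp_le)
  have "(pi_norm n \<pi> (unit_vec n x - \<pi> x \<cdot>\<^sub>v vec n (\<lambda>_. 1)))\<^sup>2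
      = (\<Sum>z<n. \<pi> z * ((unit_vec n x - \<pi> x \<cdot>\<^sub>v vec n (\<lambda>_. 1)) $ z)\<^sup>2)"
    by (rule pi_norm_sq[OF \<pi>0])
  also have "\<dots> = (\<Sum>z<n. \<pi> z * ((if z = x then 1 else 0) - \<pi> x)\<^sup>2)"
    using x by (intro sum.cong) auto
  also have "\<dots> = (\<Sum>z<n. \<pi> z * (if z = x then 1 else 0) * (1 - 2 * \<pi> x) + \<pi> z * (\<pi> x)\<^sup>2)"
    by (intro sum.cong) (auto simp: power2_eq_square algebra_simps)
  also have "\<dots> = \<pi> x * (1 - 2 * \<pi> x) + (\<pi> x)\<^sup>2"
    using x sum1
    by (simp add: sum.distrib sum_distrib_right[symmetric] if_distrib[of "\<lambda>t. \<pi> _ * t"] cong: if_cong)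
  finally show ?thesis by (simp add: power2_eq_square algebra_simps)
qed

lemma pi_adjoint_mult_diag:
  assumes M: "M \<in> carrier_mat n n" and x: "x < n" and \<pi>: "\<And>y. y < n \<Longrightarrow> 0 \<le> \<pi> y"
  shows "(pi_adjoint n \<pi> M * M) $$ (x, x) = (pi_norm n \<pi> (col M x))\<^sup>2 / \<pi> x"
proof -
  have "(pi_adjoint n \<pi> M * M) $$ (x, x) = (\<Sum>y<n. \<pi> y * (col M x $ y)\<^sup>2) / \<pi> x"
    using x M unfolding pi_adjoint_def
    by (simp add: scalar_prod_def atLeast0LessThan sum_divide_distrib power2_eq_square mult_ac)
  then show ?thesis by (simp only: pi_norm_sq[of n \<pi>, OF \<pi>])
qed

lemma frob_sq_sub_Pi_mat_le:
  assumes \<pi>: "prob_dist n \<pi>" and B: "B \<in> carrier_mat n n"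
    and B_ones: "B *\<^sub>v vec n (\<lambda>_. 1) = vec n (\<lambda>_. 1)"
    and bound: "\<And>f. f \<in> carrier_vec n \<Longrightarrow> pi_mean n \<pi> f = 0 \<Longrightarrow> pi_norm n \<pi> (B *\<^sub>v f) \<le> K * pi_norm n \<pi> f"
  shows "frob_sq n \<pi> (B - Pi_mat n \<pi>) \<le> real (n - 1) * K\<^sup>2"
proof -
  have pos: "\<And>x. x < n \<Longrightarrow> 0 < \<pi> x" and sum1: "(\<Sum>x<n. \<pi> x) = 1"
    using \<pi> unfolding prob_dist_def by auto
  define M where "M = B - Pi_mat n \<pi>"
  have Mc: "M \<in> carrier_mat n n" unfolding M_def by (rule minus_carrier_mat) (simp add: Pi_mat_def)
  define g where "g x = unit_vec n x - \<pi> x \<cdot>\<^sub>v vec n (\<lambda>_. 1)" for x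
  have rows: "(\<Sum>z<n. B $$ (y, z)) = 1" if "y < n" for y
    using arg_cong[OF B_ones, of "\<lambda>v. v $ y"] B that by (simp add: scalar_prod_def atLeast0LessThan)
  have M_col: "col M x = B *\<^sub>v g x" if "x < n" for x
    using that B Mc rows unfolding M_def g_def Pi_mat_def
    by (intro eq_vecI) (simp_all add: scalar_prod_def atLeast0LessThan algebra_simps sum_subtractf
        sum_distrib_left[symmetric] if_distrib[of "\<lambda>t. B $$ (_, _) * t"] cong: if_cong)
  have diag: "(pi_adjoint n \<pi> M * M) $$ (x, x) \<le> K\<^sup>2 * (1 - \<pi> x)" if x: "x < n" for x
  proof -
    have "(pi_adjoint n \<pi> M * M) $$ (x, x) = (pi_norm n \<pi> (B *\<^sub>v g x))\<^sup>2 / \<pi> x"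
      using pi_adjoint_mult_diag[OF Mc x, of \<pi>] pos M_col[OF x] by (simp add: less_imp_le)
    also have "\<dots> \<le> (K * pi_norm n \<pi> (g x))\<^sup>2 / \<pi> x"
      using bound[of "g x"] pi_mean_centred_unit_vec[OF \<pi> x] pi_norm_nonneg pos[OF x]
      unfolding g_def by (intro divide_right_mono power_mono) auto
    also have "\<dots> = K\<^sup>2 * (1 - \<pi> x)"
      using pi_norm_centred_unit_vec[OF \<pi> x] pos[OF x] unfolding g_def by (simp add: power_mult_distrib)
    finally show ?thesis .
  qed
  have "frob_sq n \<pi> M \<le> (\<Sum>x<n. K\<^sup>2 * (1 - \<pi> x))"
    unfolding frob_sq_def using diag by (intro sum_mono) auto
  also have "\<dots> = real (n - 1) * K\<^sup>2"
    using sum1 pos by (cases n) (auto simp: sum_subtractf sum_distrib_left[symmetric] of_nat_diff)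
  finally show ?thesis unfolding M_def .
qed

lemma frob_sq_pow_sub_Pi_mat_le:
  assumes \<pi>: "prob_dist n \<pi>" and A: "transition_matrix n A" "reversible n \<pi> A" and c: "0 \<le> c"
    and contraction: "\<And>f. f \<in> carrier_vec n \<Longrightarrow> pi_mean n \<pi> f = 0
      \<Longrightarrow> pi_norm n \<pi> (A *\<^sub>v f) \<le> c * pi_norm n \<pi> f"
  shows "frob_sq n \<pi> (A ^\<^sub>m l - Pi_mat n \<pi>) \<le> real (n - 1) * c ^ (2 * l)"
proof -
  have Ac: "A \<in> carrier_mat n n" using A(1) unfolding transition_matrix_def by simp
  have "frob_sq n \<pi> (A ^\<^sub>m l - Pi_mat n \<pi>) \<le> real (n - 1) * (c ^ l)\<^sup>2"
  proof (rule frob_sq_sub_Pi_mat_le[OF \<pi> pow_carrier_mat[OF Ac]])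
    show "A ^\<^sub>m l *\<^sub>v vec n (\<lambda>_. 1) = vec n (\<lambda>_. 1)"
      by (rule pow_mat_mult_vec_fixed[OF Ac vec_carrier transition_matrix_mult_ones[OF A(1)]])
    show "pi_norm n \<pi> (A ^\<^sub>m l *\<^sub>v f) \<le> c ^ l * pi_norm n \<pi> f"
      if "f \<in> carrier_vec n" "pi_mean n \<pi> f = 0" for f
      using that pi_mean_mult_reversible[OF A] contraction
      by (intro pow_mat_mult_vec_bound[where V = "\<lambda>f. pi_mean n \<pi> f = 0", OF Ac c]) auto
  qed
  also have "(c ^ l)\<^sup>2 = c ^ (2 * l)" by (simp only: power_mult[symmetric] mult.commute)
  finally show ?thesis .
qed

lemma abs_spectral_gap_le_1: "abs_spectral_gap n P \<le> 1"
  unfolding abs_spectral_gap_def by simp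

theorem corollary4p12:
  fixes n :: nat and \<pi> :: "nat \<Rightarrow> real" and P :: "real mat" and Os :: "nat set set"
    and l :: nat and \<alpha> :: real
  assumes "prob_dist n \<pi>"
    and "transition_matrix n P"
    and "reversible n \<pi> P"
    and "partition_on {..<n} Os"
    and "l \<ge> 2"
    and "0 < \<alpha>" and "\<alpha> < 1"
  shows "frob_sq n \<pi> ((\<alpha> \<cdot>\<^sub>m P + (1 - \<alpha>) \<cdot>\<^sub>m gibbs_kernel n \<pi> Os) ^\<^sub>m l - Pi_mat n \<pi>)
           \<le> real (n - 1) * (1 - \<alpha> * abs_spectral_gap n P) ^ (2 * l)"
proof -
  \<comment> \<open>The bound holds for every l.\<close>
  define G where "G = gibbs_kernel n \<pi> Os"
  have pos: "\<And>x. x < n \<Longrightarrow> 0 < \<pi> x" using assms(1) unfolding prob_dist_def by auto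
  have G: "transition_matrix n G" "reversible n \<pi> G"
    unfolding G_def using transition_matrix_gibbs_kernel[OF assms(4)] pos reversible_gibbs_kernel[OF assms(4)]
    by auto
  have carrier: "P \<in> carrier_mat n n" "G \<in> carrier_mat n n"
    using assms(2) G(1) unfolding transition_matrix_def by simp_all
  have A: "transition_matrix n (\<alpha> \<cdot>\<^sub>m P + (1 - \<alpha>) \<cdot>\<^sub>m G)" "reversible n \<pi> (\<alpha> \<cdot>\<^sub>m P + (1 - \<alpha>) \<cdot>\<^sub>m G)"
    using transition_matrix_convex_comb[OF assms(2) G(1)] reversible_lincomb[OF assms(3) G(2) carrier]
      assms(6,7) by simp_all
  have "\<alpha> * abs_spectral_gap n P \<le> \<alpha> * 1"
    using abs_spectral_gap_le_1 assms(6) by (intro mult_left_mono) auto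
  then have c: "0 \<le> 1 - \<alpha> * abs_spectral_gap n P" using assms(7) by simp
  have "pi_norm n \<pi> ((\<alpha> \<cdot>\<^sub>m P + (1 - \<alpha>) \<cdot>\<^sub>m G) *\<^sub>v f) \<le> (1 - \<alpha> * abs_spectral_gap n P) * pi_norm n \<pi> f"
    if "f \<in> carrier_vec n" "pi_mean n \<pi> f = 0" for f
    using mixture_mean_zero_contraction[OF assms(1-3) G _ _ that] assms(6,7) by simp
  from frob_sq_pow_sub_Pi_mat_le[OF assms(1) A c this] show ?thesis unfolding G_def .
qed

end
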